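(* Let $L:\mathbb{R}^d\to\mathbb{R}^{\mathcal{Y}}_+$ be a polyhedral loss which indirectly elicits a finite property $\gamma:\Delta_{\mathcal{Y}}\rightrightarrows\mathcal{R}$. Then for any loss $\ell:\mathcal{R}\to\mathbb{R}^{\mathcal{Y}}_+$ eliciting $\gamma$, there exists a link $\psi:\mathbb{R}^d\to\mathcal{R}$ such that $(L,\psi)$ is calibrated with respect to $\ell$.
   Context: $\mathcal{Y}$ is a finite label set, $\Delta_{\mathcal{Y}}$ the probability simplex, $\mathbb{R}^{\mathcal{Y}}_+$ the nonnegative orthant. A property is a map $\Gamma:\Delta_{\mathcal{Y}}\rightrightarrows\mathcal{R}$ assigning to each $p$ a nonempty subset of $\mathcal{R}$; it is finite if $\mathcal{R}$ is finite; its level sets are $\Gamma_r=\{p:r\in\Gamma(p)\}$. A loss $L:\mathcal{R}\to\mathbb{R}^{\mathcal{Y}}_+$ elicits $\Gamma$ if $\Gamma(p)=\arg\min_{r\in\mathcal{R}}\langle p,L(r)\rangle$ for all $p$ (requiring the minimum to be attained); write $\mathrm{prop}[L]$ for this property. $L:\mathbb{R}^d\to\mathbb{R}^{\mathcal{Y}}_+$ is polyhedral if each coordinate is a pointwise maximum of finitely many affine functions (polyhedral losses elicit a property). A loss $L$ eliciting $\Gamma$ indirectly elicits $\gamma:\Delta_{\mathcal{Y}}\rightrightarrows\mathcal{R}$ if for every $u$ there is $r\in\mathcal{R}$ with $\Gamma_u\subseteq\gamma_r$. $(L,\psi)$ is calibrated with respect to $\ell$ if for all $p$, $\inf_{u:\psi(u)\notin\mathrm{prop}[\ell](p)}\langle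 p,L(u)\rangle>\inf_{u}\langle p,L(u)\rangle$ (infimum over the empty set is $+\infty$). *)

theory Defs
  imports "HOL-Analysis.Analysis" "HOL-Library.Extended_Real"
begin

definition prob_simplex :: "('y::finite \<Rightarrow> real) set" where
  "prob_simplex = {p. (\<forall>y. 0 \<le> p y) \<and> (\<Sum>y\<in>UNIV. p y) = 1}"

definition eloss :: "('y::finite \<Rightarrow> real) \<Rightarrow> ('y \<Rightarrow> real) \<Rightarrow> real" where
  "eloss p v = (\<Sum>y\<in>UNIV. p y * v y)"

definition nonneg_loss :: "('r \<Rightarrow> 'y \<Rightarrow> real) \<Rightarrow> bool" where
  "nonneg_loss L \<longleftrightarrow> (\<forall>r y. 0 \<le> L r y)"

definition prop_of :: "('r \<Rightarrow> 'y::finite \<Rightarrow> real) \<Rightarrow> ('y \<Rightarrow> real) \<Rightarrow> 'r set" where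
  "prop_of L p = {r. \<forall>r'. eloss p (L r) \<le> eloss p (L r')}"

definition elicits :: "('r \<Rightarrow> 'y::finite \<Rightarrow> real) \<Rightarrow> (('y \<Rightarrow> real) \<Rightarrow> 'r set) \<Rightarrow> bool" where
  "elicits L \<Gamma> \<longleftrightarrow> (\<forall>p\<in>prob_simplex. \<Gamma> p = prop_of L p \<and> prop_of L p \<noteq> {})"

definition level_set :: "(('y::finite \<Rightarrow> real) \<Rightarrow> 'r set) \<Rightarrow> 'r \<Rightarrow> ('y \<Rightarrow> real) set" where
  "level_set \<Gamma> r = {p\<in>prob_simplex. r \<in> \<Gamma> p}"

definition indirectly_elicits ::
  "('u \<Rightarrow> 'y::finite \<Rightarrow> real) \<Rightarrow> (('y \<Rightarrow> real) \<Rightarrow> 'r set) \<Rightarrow> bool" where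
  "indirectly_elicits L \<gamma> \<longleftrightarrow>
     elicits L (prop_of L) \<and> (\<forall>u. \<exists>r. level_set (prop_of L) u \<subseteq> level_set \<gamma> r)"

definition polyhedral_fun :: "(real^'d \<Rightarrow> real) \<Rightarrow> bool" where
  "polyhedral_fun f \<longleftrightarrow>
     (\<exists>A :: ((real^'d) \<times> real) set. finite A \<and> A \<noteq> {} \<and>
        (\<forall>u. f u = Max ((\<lambda>(a, b). a \<bullet> u + b) ` A)))"

definition polyhedral_loss :: "(real^'d \<Rightarrow> 'y \<Rightarrow> real) \<Rightarrow> bool" where
  "polyhedral_loss L \<longleftrightarrow> (\<forall>y. polyhedral_fun (\<lambda>u. L u y))"

(* (L, psi) calibrated w.r.t. ell; infimum over the empty set is +infinity (ereal) *)
definition calibrated ::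
  "('u \<Rightarrow> 'y::finite \<Rightarrow> real) \<Rightarrow> ('u \<Rightarrow> 'r) \<Rightarrow> ('r \<Rightarrow> 'y \<Rightarrow> real) \<Rightarrow> bool" where
  "calibrated L \<psi> ell \<longleftrightarrow>
     (\<forall>p\<in>prob_simplex.
        (INF u\<in>{u. \<psi> u \<notin> prop_of ell p}. ereal (eloss p (L u)))
          > (INF u. ereal (eloss p (L u))))"

end

theory Submission
  imports Defs
begin

text \<open>
  A polyhedral loss is affine on each cell of a finite polyhedral subdivision of \<open>\<real>\<^sup>d\<close>, and a
  minimizer of the (then affine) expected loss on a cell can be moved to any point of the face
  of minimizers. Choosing one point in every nonempty face of every cell therefore gives a finite
  set \<open>U\<close> of reports containing a minimizer for every distribution \<open>p\<close>.

  Every report \<open>u\<close> is dominated by \<open>U\<close>: \<open>L(u)\<close> lies in \<open>conv L(U) + \<real>\<^sup>Y\<^sub>+\<close>, for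
  otherwise a separating hyperplane would have a nonnegative normal, i.e. (after scaling) a
  distribution for which no point of \<open>U\<close> beats \<open>u\<close>. Some \<open>u' \<in> U\<close> carries weight at least
  \<open>1/|U|\<close> in that convex combination, so the excess expected loss of \<open>u'\<close> is at most \<open>|U|\<close>
  times that of \<open>u\<close>. Linking \<open>u\<close> to a \<open>\<gamma>\<close>-report refined by \<open>u'\<close> gives calibration: when
  the link is wrong, \<open>u'\<close> is not optimal, so its excess loss is at least the smallest positive
  excess over the finite set \<open>U\<close>.
\<close>

lemma eloss_eq_inner: "eloss p v = vec_lambda p \<bullet> vec_lambda v"
  by (simp add: eloss_def inner_vec_def)

lemma uniform_in_prob_simplex: "(\<lambda>y::'y::finite. 1 / CARD('y)) \<in> prob_simplex"
  by (simp add: prob_simplex_def)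

lemma prop_of_iff_le:
  assumes "u0 \<in> prop_of L p"
  shows "u \<in> prop_of L p \<longleftrightarrow> eloss p (L u) \<le> eloss p (L u0)"
  using assms unfolding prop_of_def by (auto intro: order_trans)

lemma polyhedral_loss_piecewise_affine:
  fixes L :: "real^'d \<Rightarrow> 'y::finite \<Rightarrow> real"
  assumes "polyhedral_loss L"
  obtains \<C> where "finite \<C>" "\<Union>\<C> = UNIV" "\<And>C. C \<in> \<C> \<Longrightarrow> polyhedron C"
    and "\<And>C. C \<in> \<C> \<Longrightarrow> \<exists>a b. \<forall>u\<in>C. \<forall>y. L u y = a y \<bullet> u + b y"
proof -
  obtain A :: "'y \<Rightarrow> ((real^'d) \<times> real) set" where
    fin: "\<And>y. finite (A y)" and ne: "\<And>y. A y \<noteq> {}" and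
    max: "\<And>u y. L u y = Max ((\<lambda>(a, b). a \<bullet> u + b) ` A y)"
    using assms unfolding polyhedral_loss_def polyhedral_fun_def by metis
  define piece where
    "piece \<sigma> = {u. \<forall>y. \<forall>(a, b)\<in>A y. a \<bullet> u + b \<le> fst (\<sigma> y) \<bullet> u + snd (\<sigma> y)}" for \<sigma>
  show thesis
  proof
    show "finite (piece ` (\<Pi>\<^sub>E y\<in>UNIV. A y))"
      using fin by (simp add: finite_PiE)
    show "\<Union> (piece ` (\<Pi>\<^sub>E y\<in>UNIV. A y)) = UNIV"
    proof (intro set_eqI iffI UNIV_I)
      fix u
      have "\<exists>ab\<in>A y. \<forall>(a, b)\<in>A y. a \<bullet> u + b \<le> fst ab \<bullet> u + snd ab" for y
      proof -
        let ?S = "(\<lambda>(a, b). a \<bullet> u + b) ` A y"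
        have "Max ?S \<in> ?S"
          using fin ne by simp
        then obtain ab where "ab \<in> A y" "Max ?S = fst ab \<bullet> u + snd ab"
          by (auto simp: case_prod_beta)
        moreover have "a \<bullet> u + b \<le> Max ?S" if "(a, b) \<in> A y" for a b
          using fin that by (simp add: Max_ge image_iff rev_bexI)
        ultimately show ?thesis
          by (metis (no_types, lifting) case_prodI2)
      qed
      then obtain \<sigma> where "\<And>y. \<sigma> y \<in> A y"
        "\<And>y. \<forall>(a, b)\<in>A y. a \<bullet> u + b \<le> fst (\<sigma> y) \<bullet> u + snd (\<sigma> y)"
        by metis
      then have "\<sigma> \<in> (\<Pi>\<^sub>E y\<in>UNIV. A y)" "u \<in> piece \<sigma>"
        by (auto simp: piece_def)
      then show "u \<in> \<Union> (piece ` (\<Pi>\<^sub>E y\<in>UNIV. A y))"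
        by blast
    qed
  next
    fix C assume "C \<in> piece ` (\<Pi>\<^sub>E y\<in>UNIV. A y)"
    then obtain \<sigma> where \<sigma>: "\<And>y. \<sigma> y \<in> A y" and C: "C = piece \<sigma>"
      by (auto simp: PiE_UNIV_domain)
    have "C = (\<Inter>(y, a, b)\<in>(SIGMA y:UNIV. A y). {u. (a - fst (\<sigma> y)) \<bullet> u \<le> snd (\<sigma> y) - b})"
      unfolding C piece_def by (auto simp: inner_diff_left algebra_simps)
    then show "polyhedron C"
      using fin by (auto intro!: polyhedron_Inter polyhedron_halfspace_le)
    have "L u y = fst (\<sigma> y) \<bullet> u + snd (\<sigma> y)" if "u \<in> C" for u y
      unfolding max using that fin \<sigma> by (intro Max_eqI) (auto simp: C piece_def)
    then show "\<exists>a b. \<forall>u\<in>C. \<forall>y. L u y = a y \<bullet> u + b y"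
      by (intro exI[of _ "\<lambda>y. fst (\<sigma> y)"] exI[of _ "\<lambda>y. snd (\<sigma> y)"]) simp
  qed
qed

lemma polyhedral_loss_finite_representatives:
  fixes L :: "real^'d \<Rightarrow> 'y::finite \<Rightarrow> real"
  assumes "polyhedral_loss L"
  obtains U where "finite U" and "\<And>p. prop_of L p \<noteq> {} \<Longrightarrow> U \<inter> prop_of L p \<noteq> {}"
proof -
  obtain \<C> where fin: "finite \<C>" and cover: "\<Union>\<C> = UNIV"
    and poly: "\<And>C. C \<in> \<C> \<Longrightarrow> polyhedron C"
    and affine: "\<And>C. C \<in> \<C> \<Longrightarrow> \<exists>a b. \<forall>u\<in>C. \<forall>y. L u y = a y \<bullet> u + b y"
    using polyhedral_loss_piecewise_affine[OF assms] by blast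
  define U where "U = (\<lambda>F. SOME u. u \<in> F) ` {F. \<exists>C\<in>\<C>. F face_of C \<and> F \<noteq> {}}"
  show thesis
  proof
    have "finite (\<Union>C\<in>\<C>. {F. F face_of C})"
      using fin poly by (simp add: finite_polyhedron_faces)
    then have "finite {F. \<exists>C\<in>\<C>. F face_of C \<and> F \<noteq> {}}"
      by (rule finite_subset[rotated]) blast
    then show "finite U"
      unfolding U_def by (rule finite_imageI)
  next
    fix p assume "prop_of L p \<noteq> {}"
    then obtain u0 where u0: "u0 \<in> prop_of L p"
      by blast
    obtain C where C: "C \<in> \<C>" "u0 \<in> C"
      using cover by blast
    obtain a b where ab: "\<forall>u\<in>C. \<forall>y. L u y = a y \<bullet> u + b y"
      using affine[OF C(1)] by blast
    define a' where "a' = (\<Sum>y\<in>UNIV. p y *\<^sub>R a y)"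
    have eloss_C: "eloss p (L u) = a' \<bullet> u + (\<Sum>y\<in>UNIV. p y * b y)" if "u \<in> C" for u
      using ab that by (simp add: eloss_def a'_def inner_sum_left distrib_left sum.distrib)
    define F where "F = C \<inter> {u. a' \<bullet> u = a' \<bullet> u0}"
    have "F face_of C"
      unfolding F_def
    proof (rule face_of_Int_supporting_hyperplane_ge)
      show "convex C"
        using poly[OF C(1)] polyhedron_imp_convex by blast
      show "a' \<bullet> u0 \<le> a' \<bullet> u" if "u \<in> C" for u
      proof -
        have "eloss p (L u0) \<le> eloss p (L u)"
          using u0 unfolding prop_of_def by blast
        then show ?thesis
          using eloss_C[OF that] eloss_C[OF C(2)] by linarith
      qed
    qed
    have "u0 \<in> F"
      using C(2) by (simp add: F_def)
    define u1 where "u1 = (SOME u. u \<in> F)"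
    have "u1 \<in> F"
      unfolding u1_def using \<open>u0 \<in> F\<close> by (rule someI)
    have "u1 \<in> U"
      unfolding U_def u1_def using C(1) \<open>F face_of C\<close> \<open>u0 \<in> F\<close> by (intro imageI) blast
    moreover have "u1 \<in> prop_of L p"
      using \<open>u1 \<in> F\<close> eloss_C C(2) by (simp add: prop_of_iff_le[OF u0] F_def)
    ultimately show "U \<inter> prop_of L p \<noteq> {}"
      by blast
  qed
qed

lemma mem_convex_hull_plus_orthant:
  fixes W :: "(real^'n) set" and v :: "real^'n"
  assumes "finite W" and below: "\<And>a. \<forall>i. 0 \<le> a $ i \<Longrightarrow> \<exists>w\<in>W. a \<bullet> w \<le> a \<bullet> v"
  obtains c n where "c \<in> convex hull W" and "\<forall>i. 0 \<le> n $ i" and "v = c + n"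
proof -
  define N :: "(real^'n) set" where "N = {n. \<forall>i. 0 \<le> n $ i}"
  define K where "K = (\<Union>c\<in>convex hull W. \<Union>n\<in>N. {c + n})"
  have W_K: "w + n \<in> K" if "w \<in> W" "n \<in> N" for w n
    using that hull_subset[of W convex] unfolding K_def by blast
  have "v \<in> K"
  proof (rule ccontr)
    assume "v \<notin> K"
    have "convex K"
      unfolding K_def N_def
      by (intro convex_sums convex_convex_hull convex_box_cart) (simp add: atLeast_def[symmetric])
    have "closed K"
      unfolding K_def N_def
      by (rule compact_closed_sums[OF compact_convex_hull[OF finite_imp_compact[OF assms(1)]]
            closed_positive_orthant])
    then obtain a b where sep: "a \<bullet> v < b" "\<And>x. x \<in> K \<Longrightarrow> b < a \<bullet> x"
      using separating_hyperplane_closed_point[OF \<open>convex K\<close> _ \<open>v \<notin> K\<close>] by blast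
    obtain w0 where w0: "w0 \<in> W"
      using below[of 0] by auto
    \<comment> \<open>\<open>K\<close> is closed under moving along positive axis directions, so the normal is nonnegative.\<close>
    have "0 \<le> a $ i" for i
    proof (rule ccontr)
      assume "\<not> 0 \<le> a $ i"
      define t where "t = (a \<bullet> w0 - b) / - a $ i"
      have "b < a \<bullet> w0"
        using sep(2) W_K[OF w0, of 0] by (simp add: N_def)
      then have "axis i t \<in> N"
        using \<open>\<not> 0 \<le> a $ i\<close> by (simp add: N_def t_def axis_def divide_nonneg_neg)
      moreover have "a \<bullet> (w0 + axis i t) = b"
        using \<open>\<not> 0 \<le> a $ i\<close> by (simp add: inner_add_right inner_axis t_def)
      ultimately show False
        using sep(2)[OF W_K[OF w0 \<open>axis i t \<in> N\<close>]] by simp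
    qed
    then obtain w where "w \<in> W" "a \<bullet> w \<le> a \<bullet> v"
      using below by blast
    moreover have "w \<in> K"
      using W_K[OF \<open>w \<in> W\<close>, of 0] by (simp add: N_def)
    ultimately show False
      using sep by fastforce
  qed
  then obtain c n where "c \<in> convex hull W" "n \<in> N" "v = c + n"
    unfolding K_def by blast
  then show thesis
    using that by (simp add: N_def)
qed

lemma convex_hull_finite_dominant_point:
  fixes W :: "'a::real_inner set"
  assumes "finite W" and "c \<in> convex hull W"
  obtains w where "w \<in> W"
    and "\<And>a m. (\<And>x. x \<in> W \<Longrightarrow> m \<le> a \<bullet> x) \<Longrightarrow> (a \<bullet> w - m) / card W \<le> a \<bullet> c - m"
proof -
  obtain \<mu> where \<mu>: "\<forall>x\<in>W. 0 \<le> \<mu> x" "sum \<mu> W = 1" "(\<Sum>x\<in>W. \<mu> x *\<^sub>R x) = c"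
    using assms by (auto simp: convex_hull_finite)
  then have "W \<noteq> {}"
    by auto
  have "\<exists>w\<in>W. 1 / card W \<le> \<mu> w"
  proof (rule ccontr)
    assume "\<not> ?thesis"
    then have "sum \<mu> W < (\<Sum>x\<in>W. 1 / card W)"
      using assms(1) \<open>W \<noteq> {}\<close> by (intro sum_strict_mono) (auto simp: not_le)
    then show False
      using assms(1) \<open>W \<noteq> {}\<close> \<mu>(2) by simp
  qed
  then obtain w where w: "w \<in> W" "1 / card W \<le> \<mu> w"
    by blast
  show thesis
  proof (rule that[OF w(1)])
    fix a m assume lower: "\<And>x. x \<in> W \<Longrightarrow> m \<le> a \<bullet> x"
    have "(a \<bullet> w - m) / card W \<le> \<mu> w * (a \<bullet> w - m)"
      using mult_right_mono[OF w(2), of "a \<bullet> w - m"] lower[OF w(1)] by simp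
    also have "\<dots> \<le> (\<Sum>x\<in>W. \<mu> x * (a \<bullet> x - m))"
      using assms(1) w(1) \<mu>(1) lower by (intro member_le_sum) auto
    also have "\<dots> = (\<Sum>x\<in>W. \<mu> x * (a \<bullet> x)) - m"
      using \<mu>(2) by (simp add: right_diff_distrib sum_subtractf flip: sum_distrib_right)
    also have "\<dots> = a \<bullet> c - m"
      unfolding \<mu>(3)[symmetric] by (simp add: inner_sum_right)
    finally show "(a \<bullet> w - m) / card W \<le> a \<bullet> c - m" .
  qed
qed

lemma finite_representatives_dominate:
  fixes L :: "'u \<Rightarrow> 'y::finite \<Rightarrow> real"
  assumes "finite U" and rep: "\<And>p. p \<in> prob_simplex \<Longrightarrow> U \<inter> prop_of L p \<noteq> {}"
  shows "\<exists>u'\<in>U. \<forall>p\<in>prob_simplex. \<forall>u0\<in>prop_of L p.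
           (eloss p (L u') - eloss p (L u0)) / card U \<le> eloss p (L u) - eloss p (L u0)"
proof -
  define W where "W = (\<lambda>u. vec_lambda (L u)) ` U"
  have "finite W"
    using \<open>finite U\<close> by (simp add: W_def)
  have below: "\<exists>w\<in>W. a \<bullet> w \<le> a \<bullet> vec_lambda (L u)" if a: "\<forall>i. 0 \<le> a $ i" for a
  proof (cases "a = 0")
    case True
    then show ?thesis
      using rep[OF uniform_in_prob_simplex] by (auto simp: W_def)
  next
    case False
    define s where "s = (\<Sum>y\<in>UNIV. a $ y)"
    have "s \<noteq> 0"
      using False a by (simp add: s_def sum_nonneg_eq_0_iff vec_eq_iff)
    then have "s > 0"
      using a by (simp add: s_def order_less_le sum_nonneg)
    define q where "q y = a $ y / s" for y
    have "q \<in> prob_simplex"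
      using a \<open>s > 0\<close> by (simp add: prob_simplex_def q_def s_def flip: sum_divide_distrib)
    then obtain u1 where "u1 \<in> U" "u1 \<in> prop_of L q"
      using rep by blast
    have scale: "a \<bullet> vec_lambda v = s * eloss q v" for v
      using \<open>s > 0\<close> by (simp add: eloss_def q_def inner_vec_def sum_distrib_left)
    have "eloss q (L u1) \<le> eloss q (L u)"
      using \<open>u1 \<in> prop_of L q\<close> unfolding prop_of_def by blast
    then have "a \<bullet> vec_lambda (L u1) \<le> a \<bullet> vec_lambda (L u)"
      using \<open>s > 0\<close> by (simp add: scale)
    then show ?thesis
      using \<open>u1 \<in> U\<close> by (auto simp: W_def)
  qed
  then obtain c n where c: "c \<in> convex hull W" and n: "\<forall>i. 0 \<le> n $ i"
    and split: "vec_lambda (L u) = c + n"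
    using mem_convex_hull_plus_orthant[OF \<open>finite W\<close> below] by blast
  obtain w where "w \<in> W"
    and dom: "\<And>a m. (\<And>x. x \<in> W \<Longrightarrow> m \<le> a \<bullet> x) \<Longrightarrow> (a \<bullet> w - m) / card W \<le> a \<bullet> c - m"
    using convex_hull_finite_dominant_point[OF \<open>finite W\<close> c] by blast
  then obtain u' where u': "u' \<in> U" "w = vec_lambda (L u')"
    by (auto simp: W_def)
  show ?thesis
  proof (intro bexI[OF _ u'(1)] ballI)
    fix p u0 assume p: "p \<in> prob_simplex" and u0: "u0 \<in> prop_of L p"
    let ?m = "eloss p (L u0)"
    have lower: "?m \<le> vec_lambda p \<bullet> x" if "x \<in> W" for x
      using that u0 by (auto simp: W_def prop_of_def eloss_eq_inner)
    have "0 < card W" "card W \<le> card U"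
      using \<open>w \<in> W\<close> \<open>finite U\<close> by (auto simp: W_def card_gt_0_iff card_image_le)
    moreover have "0 \<le> eloss p (L u') - ?m"
      using u0 unfolding prop_of_def by auto
    ultimately have "(eloss p (L u') - ?m) / card U \<le> (eloss p (L u') - ?m) / card W"
      by (intro divide_left_mono) auto
    also have "\<dots> \<le> vec_lambda p \<bullet> c - ?m"
      using dom[OF lower] u'(2) by (simp add: eloss_eq_inner)
    also have "\<dots> \<le> eloss p (L u) - ?m"
    proof -
      have "0 \<le> vec_lambda p \<bullet> n"
        using p n by (simp add: inner_vec_def prob_simplex_def sum_nonneg)
      then show ?thesis
        by (simp add: eloss_eq_inner split inner_add_right)
    qed
    finally show "(eloss p (L u') - ?m) / card U \<le> eloss p (L u) - ?m" .
  qed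
qed

lemma finite_positive_lower_bound:
  fixes f :: "'a \<Rightarrow> real"
  assumes "finite U"
  obtains \<delta> where "0 < \<delta>" and "\<And>u. u \<in> U \<Longrightarrow> 0 < f u \<Longrightarrow> \<delta> \<le> f u"
proof
  let ?D = "insert 1 {f u | u. u \<in> U \<and> 0 < f u}"
  have "finite ?D"
    using assms by simp
  then show "0 < Min ?D"
    by (subst Min_gr_iff) auto
  show "Min ?D \<le> f u" if "u \<in> U" "0 < f u" for u
    using \<open>finite ?D\<close> that by (intro Min_le) auto
qed

lemma calibratedI_margin:
  fixes L :: "'u \<Rightarrow> 'y::finite \<Rightarrow> real" and \<psi> :: "'u \<Rightarrow> 'r" and ell :: "'r \<Rightarrow> 'y \<Rightarrow> real"
  assumes "\<And>p. p \<in> prob_simplex \<Longrightarrow>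
    \<exists>u0 \<delta>. 0 < \<delta> \<and> (\<forall>u. \<psi> u \<notin> prop_of ell p \<longrightarrow> eloss p (L u0) + \<delta> \<le> eloss p (L u))"
  shows "calibrated L \<psi> ell"
  unfolding calibrated_def
proof
  fix p :: "'y \<Rightarrow> real" assume "p \<in> prob_simplex"
  then obtain u0 \<delta> where "0 < \<delta>"
    and margin: "\<And>u. \<psi> u \<notin> prop_of ell p \<Longrightarrow> eloss p (L u0) + \<delta> \<le> eloss p (L u)"
    using assms by blast
  have "(INF u. ereal (eloss p (L u))) \<le> ereal (eloss p (L u0))"
    by (rule INF_lower) simp
  also have "\<dots> < ereal (eloss p (L u0) + \<delta>)"
    using \<open>0 < \<delta>\<close> by simp
  also have "\<dots> \<le> (INF u\<in>{u. \<psi> u \<notin> prop_of ell p}. ereal (eloss p (L u)))"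
    using margin by (intro INF_greatest) simp
  finally show "(INF u. ereal (eloss p (L u))) < (INF u\<in>{u. \<psi> u \<notin> prop_of ell p}. ereal (eloss p (L u)))" .
qed

lemma calibratedI_dominating_selection:
  fixes L :: "'u \<Rightarrow> 'y::finite \<Rightarrow> real" and sel :: "'u \<Rightarrow> 'u"
  assumes "finite U" and sel: "\<And>u. sel u \<in> U"
    and minimizer: "\<And>p. p \<in> prob_simplex \<Longrightarrow> prop_of L p \<noteq> {}"
    and dominate: "\<And>p u u0. p \<in> prob_simplex \<Longrightarrow> u0 \<in> prop_of L p \<Longrightarrow>
      (eloss p (L (sel u)) - eloss p (L u0)) / card U \<le> eloss p (L u) - eloss p (L u0)"
    and link: "\<And>p u. p \<in> prob_simplex \<Longrightarrow> sel u \<in> prop_of L p \<Longrightarrow> \<psi> u \<in> prop_of ell p"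
  shows "calibrated L \<psi> ell"
proof (rule calibratedI_margin)
  fix p :: "'y \<Rightarrow> real" assume p: "p \<in> prob_simplex"
  then obtain u0 where u0: "u0 \<in> prop_of L p"
    using minimizer by blast
  obtain \<delta> where "0 < \<delta>" and gap: "\<And>u'. u' \<in> U \<Longrightarrow> 0 < eloss p (L u') - eloss p (L u0) \<Longrightarrow>
      \<delta> \<le> eloss p (L u') - eloss p (L u0)"
    using finite_positive_lower_bound[OF \<open>finite U\<close>, of "\<lambda>u'. eloss p (L u') - eloss p (L u0)"]
    by blast
  have "eloss p (L u0) + \<delta> / card U \<le> eloss p (L u)" if "\<psi> u \<notin> prop_of ell p" for u
  proof -
    have "sel u \<notin> prop_of L p"
      using link p that by blast
    then have "0 < eloss p (L (sel u)) - eloss p (L u0)"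
      using prop_of_iff_le[OF u0] by simp
    then have "\<delta> \<le> eloss p (L (sel u)) - eloss p (L u0)"
      using gap[OF sel] by blast
    then have "\<delta> / card U \<le> (eloss p (L (sel u)) - eloss p (L u0)) / card U"
      by (simp add: divide_right_mono)
    then show ?thesis
      using dominate[OF p u0, of u] by linarith
  qed
  moreover have "0 < \<delta> / card U"
  proof -
    have "0 < card U"
      using \<open>finite U\<close> sel card_gt_0_iff by blast
    then show ?thesis
      using \<open>0 < \<delta>\<close> by simp
  qed
  ultimately show "\<exists>u0 \<delta>. 0 < \<delta> \<and> (\<forall>u. \<psi> u \<notin> prop_of ell p \<longrightarrow> eloss p (L u0) + \<delta> \<le> eloss p (L u))"
    by blast
qed

theorem theorem8:
  fixes L :: "real^'d \<Rightarrow> 'y::finite \<Rightarrow> real"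
    and \<gamma> :: "('y \<Rightarrow> real) \<Rightarrow> 'r::finite set"
    and ell :: "'r \<Rightarrow> 'y \<Rightarrow> real"
  assumes "nonneg_loss L"
    and "polyhedral_loss L"
    and "indirectly_elicits L \<gamma>"
    and "nonneg_loss ell"
    and "elicits ell \<gamma>"
  shows "\<exists>\<psi> :: real^'d \<Rightarrow> 'r. calibrated L \<psi> ell"
proof -
  have minimizer: "\<And>p. p \<in> prob_simplex \<Longrightarrow> prop_of L p \<noteq> {}"
    and refine: "\<forall>u. \<exists>r. level_set (prop_of L) u \<subseteq> level_set \<gamma> r"
    using assms(3) unfolding indirectly_elicits_def elicits_def by auto
  obtain U where "finite U" and "\<And>p. prop_of L p \<noteq> {} \<Longrightarrow> U \<inter> prop_of L p \<noteq> {}"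
    using polyhedral_loss_finite_representatives[OF assms(2)] by blast
  then have rep: "\<And>p. p \<in> prob_simplex \<Longrightarrow> U \<inter> prop_of L p \<noteq> {}"
    using minimizer by blast
  have "\<forall>u. \<exists>u'. u' \<in> U \<and> (\<forall>p\<in>prob_simplex. \<forall>u0\<in>prop_of L p.
      (eloss p (L u') - eloss p (L u0)) / card U \<le> eloss p (L u) - eloss p (L u0))"
    using finite_representatives_dominate[OF \<open>finite U\<close> rep] by blast
  then obtain sel where sel: "\<And>u. sel u \<in> U" and dominate: "\<And>p u u0. p \<in> prob_simplex \<Longrightarrow>
      u0 \<in> prop_of L p \<Longrightarrow> (eloss p (L (sel u)) - eloss p (L u0)) / card U \<le> eloss p (L u) - eloss p (L u0)"
    by (auto dest!: choice)
  obtain \<rho> where \<rho>: "\<And>u. level_set (prop_of L) u \<subseteq> level_set \<gamma> (\<rho> u)"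
    using choice[OF refine] by blast
  have "calibrated L (\<rho> \<circ> sel) ell"
  proof (rule calibratedI_dominating_selection[OF \<open>finite U\<close> sel minimizer dominate])
    fix p u assume "p \<in> prob_simplex" "sel u \<in> prop_of L p"
    then have "p \<in> level_set \<gamma> (\<rho> (sel u))"
      using \<rho> unfolding level_set_def by blast
    then show "(\<rho> \<circ> sel) u \<in> prop_of ell p"
      using assms(5) unfolding level_set_def elicits_def by auto
  qed
  then show ?thesis
    by blast
qed

end
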